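(* Let $X_1, X_2, \ldots$ be independent and identically distributed random variables with a common continuous distribution function, and let $I_1=1$ and, for $t\ge 2$, $I_t = 1$ if $X_t > \max\{X_1,\ldots,X_{t-1}\}$ and $I_t=0$ otherwise. Let $(\omega_t)_{t\ge1}$ be real weights with $\omega_t \sim t^n$ as $t\to\infty$ (i.e. $\omega_t/t^n \to 1$), and define, for $T\ge 2$ and $t=1,\ldots,T$, $$\xi^{\omega}_{Tt} = \omega_t\,\frac{I_t - E(I_t)}{\sigma_T}, \qquad \sigma_t^2 = \sum_{k=1}^{t} \omega_k^2 \operatorname{Var}(I_k).$$ If $n > 0$, then the central limit theorem does not hold for the variables $\xi^{\omega}_{Tt}$, i.e. $\sum_{t=1}^{T} \xi^{\omega}_{Tt}$ does not converge in distribution to the standard normal distribution as $T\to\infty$.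
   Context: $E(I_t)=1/t$ and $\operatorname{Var}(I_t)=\frac1t(1-\frac1t)$; the $I_t$ are independent under the stated assumptions. *)

theory Defs
  imports "HOL-Probability.Probability"
begin

definition record_ind :: "(nat \<Rightarrow> 'a \<Rightarrow> real) \<Rightarrow> nat \<Rightarrow> 'a \<Rightarrow> real" where
  "record_ind X t x =
     (if t = 1 then 1
      else if X t x > Max ((\<lambda>s. X s x) ` {1..<t}) then 1 else 0)"

end

theory Submission
  imports Defs "HOL-Real_Asymp.Real_Asymp"
begin

(* Since 0 <= I_t <= 1 and E I_t = 1/t, the normalized sum is bounded below by
   -(sum_{t<=T} w_t / t) / sigma_T.  For n > 0 the numerator grows like sum t^(n-1) ~ T^n / n,
   and sigma_T^2 ~ sum t^(2n-1) ~ T^(2n) / (2n), so the normalized sums are eventually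
   bounded below by a constant -C.  Their distribution functions therefore vanish left of -C,
   whereas the standard normal distribution function is positive everywhere, so weak convergence
   fails.  The moments of I_t come from exchangeability: X_1, ..., X_t are almost surely distinct
   (their law is atomless), and each of them is equally likely to be the strict maximum. *)

lemma (in prob_space) AE_indep_var_neq:
  fixes X Y :: "'a \<Rightarrow> real"
  assumes indep: "indep_var borel X borel Y"
    and atomless: "\<And>a. measure (distr M borel Y) {a} = 0"
  shows "AE x in M. X x \<noteq> Y x"
proof -
  have [measurable]: "X \<in> borel_measurable M" "Y \<in> borel_measurable M"
    using indep_var_rv1[OF indep] indep_var_rv2[OF indep] by auto
  let ?\<mu> = "distr M borel X" and ?\<nu> = "distr M borel Y"
  interpret \<nu>: prob_space ?\<nu> by (rule prob_space_distr) simp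
  define D :: "(real \<times> real) set" where "D = {p. fst p = snd p}"
  have D[measurable]: "D \<in> sets (borel \<Otimes>\<^sub>M borel)"
    unfolding D_def borel_prod by (intro borel_closed closed_Collect_eq continuous_intros)
  have "emeasure M {x\<in>space M. X x = Y x} = emeasure (distr M (borel \<Otimes>\<^sub>M borel) (\<lambda>x. (X x, Y x))) D"
    by (subst emeasure_distr[OF _ D]) (auto simp: D_def intro!: arg_cong[where f="emeasure M"])
  also have "\<dots> = emeasure (?\<mu> \<Otimes>\<^sub>M ?\<nu>) D"
    using indep by (simp add: indep_var_distribution_eq)
  also have "\<dots> = (\<integral>\<^sup>+a. emeasure ?\<nu> (Pair a -` D) \<partial>?\<mu>)"
    using D by (intro \<nu>.emeasure_pair_measure_alt) simp
  also have "\<dots> = (\<integral>\<^sup>+a. emeasure ?\<nu> {a} \<partial>?\<mu>)"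
    by (simp add: D_def vimage_def)
  also have "\<dots> = 0"
    using atomless by (simp add: \<nu>.emeasure_eq_measure)
  finally show ?thesis
    by (subst AE_iff_measurable[OF _ refl]) auto
qed

lemma (in prob_space) AE_indep_atomless_distinct:
  fixes X :: "'i \<Rightarrow> 'a \<Rightarrow> real"
  assumes "finite J"
    and indep: "indep_vars (\<lambda>_. borel) X J"
    and ident: "\<And>i. i \<in> J \<Longrightarrow> distr M borel (X i) = \<mu>"
    and atomless: "\<And>a. measure \<mu> {a} = 0"
  shows "AE x in M. \<forall>i\<in>J. \<forall>k\<in>J - {i}. X i x \<noteq> X k x"
proof (intro AE_finite_allI \<open>finite J\<close> finite_Diff)
  fix i k assume ik: "i \<in> J" "k \<in> J - {i}"
  have "indep_vars (\<lambda>_. borel) X {i, k}"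
    using ik by (intro indep_vars_subset[OF indep]) auto
  from indep_vars_Min[OF _ _ this] ik
  have "indep_var borel (X i) borel (\<lambda>x. Min ((\<lambda>i. X i x) ` {k}))"
    by auto
  then have "indep_var borel (X i) borel (X k)"
    by simp
  then show "AE x in M. X i x \<noteq> X k x"
    using atomless ident ik by (intro AE_indep_var_neq) auto
qed

lemma (in prob_space) distr_restrict_eq_PiM_if_iid:
  fixes X :: "'i \<Rightarrow> 'a \<Rightarrow> real"
  assumes "J \<noteq> {}"
    and indep: "indep_vars (\<lambda>_. borel) X J"
    and ident: "\<And>i. i \<in> J \<Longrightarrow> distr M borel (X i) = \<mu>"
  shows "distr M (\<Pi>\<^sub>M i\<in>J. borel) (\<lambda>x. \<lambda>i\<in>J. X i x) = (\<Pi>\<^sub>M i\<in>J. \<mu>)"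
proof -
  have rv: "\<And>i. i \<in> J \<Longrightarrow> random_variable borel (X i)"
    using indep by (simp add: indep_vars_def)
  have "distr M (\<Pi>\<^sub>M i\<in>J. borel) (\<lambda>x. \<lambda>i\<in>J. X i x) = (\<Pi>\<^sub>M i\<in>J. distr M borel (X i))"
    using indep_vars_iff_distr_eq_PiM'[THEN iffD1, OF _ rv indep] \<open>J \<noteq> {}\<close> by auto
  also have "\<dots> = (\<Pi>\<^sub>M i\<in>J. \<mu>)"
    by (intro PiM_cong) (simp_all add: ident)
  finally show ?thesis .
qed

lemma measure_PiM_strict_max_swap:
  fixes \<mu> :: "real measure" and J :: "'i set"
  assumes \<mu>: "prob_space \<mu>" "sets \<mu> = sets borel" and J: "finite J" "j \<in> J" "k \<in> J"
  defines "P \<equiv> \<Pi>\<^sub>M i\<in>J. \<mu>"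
  shows "measure P {y\<in>space P. \<forall>i\<in>J - {j}. y i < y j} = measure P {y\<in>space P. \<forall>i\<in>J - {k}. y i < y k}"
proof -
  define A where "A j = {y\<in>space P. \<forall>i\<in>J - {j}. y i < y j}" for j
  have sets_P: "sets P = sets (\<Pi>\<^sub>M i\<in>J. borel)"
    unfolding P_def using \<mu>(2) by (intro sets_PiM_cong) auto
  have "A k \<in> sets (\<Pi>\<^sub>M i\<in>J. borel)"
  proof -
    have [measurable]: "finite (J - {k})" "\<And>i. i \<in> J \<Longrightarrow> (\<lambda>y. y i) \<in> borel_measurable (\<Pi>\<^sub>M i\<in>J. borel)"
      using J(1) by auto
    show ?thesis
      unfolding A_def sets_eq_imp_space_eq[OF sets_P] using J(3) by measurable
  qed
  then have A_sets: "A k \<in> sets P"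
    by (simp add: sets_P)
  \<comment> \<open>qualified because HOL-Analysis also defines a matrix \<open>transpose\<close>\<close>
  define R where "R y = (\<lambda>i\<in>J. y (Transposition.transpose j k i))" for y :: "'i \<Rightarrow> real"
  have perm: "inj_on (Transposition.transpose j k) J" "Transposition.transpose j k \<in> J \<rightarrow> J"
    using J by (auto simp: inj_on_def transpose_eq_iff Transposition.transpose_def)
  have "R \<in> measurable P P"
    unfolding R_def P_def using perm(2) by (intro measurable_restrict measurable_component_singleton) auto
  moreover have "distr P P R = P"
    using distr_PiM_reindex[OF _ perm, of "\<lambda>_. \<mu>"] \<mu>(1) by (simp add: R_def[abs_def] P_def)
  ultimately have "measure P (A k) = measure P (R -` A k \<inter> space P)"
    using measure_distr[of R P P "A k"] A_sets by simp
  also have "R -` A k \<inter> space P = A j"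
  proof -
    have image: "Transposition.transpose j k ` (J - {k}) = J - {j}"
      using J by (auto simp: image_iff transpose_eq_iff Transposition.transpose_def)
    have "(\<forall>i\<in>J - {k}. y (Transposition.transpose j k i) < y j) \<longleftrightarrow> (\<forall>i\<in>J - {j}. y i < y j)"
      for y :: "'i \<Rightarrow> real"
      unfolding image[symmetric] by simp
    then show ?thesis
      using J \<mu>(2) by (auto simp: A_def R_def P_def space_PiM sets_eq_imp_space_eq[of \<mu> borel])
  qed
  finally show ?thesis
    by (simp add: A_def)
qed

lemma (in prob_space) prob_strict_max_exchangeable:
  fixes X :: "'i \<Rightarrow> 'a \<Rightarrow> real"
  assumes J: "finite J" "j \<in> J" "k \<in> J"
    and indep: "indep_vars (\<lambda>_. borel) X J"
    and ident: "\<And>i. i \<in> J \<Longrightarrow> distr M borel (X i) = \<mu>"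
  shows "prob {x\<in>space M. \<forall>i\<in>J - {j}. X i x < X j x} =
         prob {x\<in>space M. \<forall>i\<in>J - {k}. X i x < X k x}"
proof -
  let ?B = "\<Pi>\<^sub>M i\<in>J. (borel :: real measure)" and ?Y = "\<lambda>x. \<lambda>i\<in>J. X i x"
  have rv: "\<And>i. i \<in> J \<Longrightarrow> random_variable borel (X i)"
    using indep by (simp add: indep_vars_def)
  have \<mu>: "prob_space \<mu>" "sets \<mu> = sets borel"
    using ident[OF J(2)] rv[OF J(2)] by (auto intro: prob_space_distr)
  have Y: "?Y \<in> measurable M ?B"
    using rv by (intro measurable_restrict) auto
  have "prob {x\<in>space M. \<forall>i\<in>J - {j}. X i x < X j x} =
      measure (distr M ?B ?Y) {y\<in>space ?B. \<forall>i\<in>J - {j}. y i < y j}" if "j \<in> J" for j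
  proof -
    have [measurable]: "finite (J - {j})" "\<And>i. i \<in> J \<Longrightarrow> (\<lambda>y. y i) \<in> borel_measurable ?B"
      using J(1) by auto
    have "{y\<in>space ?B. \<forall>i\<in>J - {j}. y i < y j} \<in> sets ?B"
      using that by measurable
    with Y show ?thesis
      using that rv by (subst measure_distr) (auto simp: space_PiM measurable_space intro!: arg_cong[where f=prob])
  qed
  moreover have "distr M ?B ?Y = (\<Pi>\<^sub>M i\<in>J. \<mu>)"
    using J indep ident by (intro distr_restrict_eq_PiM_if_iid) auto
  moreover have "space (\<Pi>\<^sub>M i\<in>J. \<mu>) = space ?B"
    using \<mu>(2) by (intro sets_eq_imp_space_eq sets_PiM_cong) auto
  ultimately show ?thesis
    using measure_PiM_strict_max_swap[OF \<mu> J] J(2,3) by simp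
qed

lemma finite_distinct_ex_strict_max:
  fixes f :: "'i \<Rightarrow> 'b::linorder"
  assumes "finite J" "J \<noteq> {}" and distinct: "\<forall>i\<in>J. \<forall>k\<in>J - {i}. f i \<noteq> f k"
  shows "\<exists>j\<in>J. \<forall>i\<in>J - {j}. f i < f j"
proof -
  have "Max (f ` J) \<in> f ` J"
    using assms by (intro Max_in) auto
  then obtain j where j: "j \<in> J" "Max (f ` J) = f j"
    by auto
  have "f i < f j" if i: "i \<in> J - {j}" for i
  proof -
    have "f i \<le> f j"
      using i assms(1) unfolding j(2)[symmetric] by (intro Max_ge) auto
    moreover have "f i \<noteq> f j"
      using distinct i j(1) by auto
    ultimately show ?thesis
      by simp
  qed
  with j(1) show ?thesis
    by blast
qed

lemma (in prob_space) prob_strict_max_iid: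
  fixes X :: "'i \<Rightarrow> 'a \<Rightarrow> real"
  assumes J: "finite J" "t \<in> J"
    and indep: "indep_vars (\<lambda>_. borel) X J"
    and ident: "\<And>i. i \<in> J \<Longrightarrow> distr M borel (X i) = \<mu>"
    and atomless: "\<And>a. measure \<mu> {a} = 0"
  shows "prob {x\<in>space M. \<forall>i\<in>J - {t}. X i x < X t x} = 1 / card J"
proof -
  define B where "B j = {x\<in>space M. \<forall>i\<in>J - {j}. X i x < X j x}" for j
  have rv: "\<And>i. i \<in> J \<Longrightarrow> random_variable borel (X i)"
    using indep by (simp add: indep_vars_def)
  have B_events: "B j \<in> events" if "j \<in> J" for j
  proof -
    have "Measurable.pred M (\<lambda>x. X i x < X j x)" if "i \<in> J" for i
      using rv[OF that] rv[OF \<open>j \<in> J\<close>] by measurable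
    then have "Measurable.pred M (\<lambda>x. \<forall>i\<in>J - {j}. X i x < X j x)"
      using J(1) by (intro pred_intros_finite) auto
    then show ?thesis
      by (simp add: B_def pred_def)
  qed
  have no_ties: "AE x in M. \<forall>i\<in>J. \<forall>k\<in>J - {i}. X i x \<noteq> X k x"
    using J(1) indep ident atomless by (rule AE_indep_atomless_distinct)
  have "AE x in M. x \<in> (\<Union>j\<in>J. B j)"
    using no_ties AE_space
  proof eventually_elim
    case (elim x)
    then obtain j where "j \<in> J" "\<forall>i\<in>J - {j}. X i x < X j x"
      using finite_distinct_ex_strict_max[of J "\<lambda>i. X i x"] J by blast
    then show ?case
      using elim by (auto simp: B_def)
  qed
  then have "prob (\<Union>j\<in>J. B j) = 1"
    using B_events J(1) by (subst prob_eq_1) auto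
  moreover have "prob (\<Union>j\<in>J. B j) = (\<Sum>j\<in>J. prob (B j))"
  proof (intro finite_measure_finite_Union)
    show "disjoint_family_on B J"
    proof (unfold disjoint_family_on_def, intro ballI impI)
      fix m n assume mn: "m \<in> J" "n \<in> J" "m \<noteq> n"
      then have "X n x < X m x \<and> X m x < X n x" if "x \<in> B m" "x \<in> B n" for x
        using that by (auto simp: B_def)
      then show "B m \<inter> B n = {}"
        by (meson disjoint_iff less_asym)
    qed
  qed (use J(1) B_events in auto)
  moreover have "prob (B j) = prob (B t)" if "j \<in> J" for j
    unfolding B_def using J that indep ident by (intro prob_strict_max_exchangeable)
  ultimately have "card J * prob (B t) = 1"
    by simp
  moreover have "card J \<noteq> 0"
    using J by auto
  ultimately show ?thesis
    by (simp add: B_def field_simps)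
qed

lemma (in prob_space) variance_zero_one_valued:
  fixes f :: "'a \<Rightarrow> real"
  assumes f: "f \<in> borel_measurable M" and zero_one: "\<And>x. x \<in> space M \<Longrightarrow> f x = 0 \<or> f x = 1"
  shows "variance f = expectation f * (1 - expectation f)"
proof -
  have square: "(f x)\<^sup>2 = f x" if "x \<in> space M" for x
    using zero_one[OF that] by auto
  have "integrable M f"
    using f by (intro integrable_const_bound[where B=1] AE_I2) (auto dest!: zero_one)
  moreover have "integrable M (\<lambda>x. (f x)\<^sup>2)"
    using \<open>integrable M f\<close> by (simp add: square cong: Bochner_Integration.integrable_cong)
  ultimately have "variance f = expectation (\<lambda>x. (f x)\<^sup>2) - (expectation f)\<^sup>2"
    by (rule variance_eq)
  also have "expectation (\<lambda>x. (f x)\<^sup>2) = expectation f"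
    by (intro Bochner_Integration.integral_cong) (simp_all add: square)
  finally show ?thesis
    by (simp add: power2_eq_square algebra_simps)
qed

lemma record_ind_zero_one: "record_ind X t x = 0 \<or> record_ind X t x = 1"
  by (simp add: record_ind_def)

lemma record_ind_bounds: "0 \<le> record_ind X t x \<and> record_ind X t x \<le> 1"
  by (simp add: record_ind_def)

lemma record_ind_measurable:
  assumes "\<And>s. s \<ge> 1 \<Longrightarrow> X s \<in> borel_measurable M" and "t \<ge> 1"
  shows "record_ind X t \<in> borel_measurable M"
proof -
  have [measurable]: "(\<lambda>x. Max ((\<lambda>s. X s x) ` {1..<t})) \<in> borel_measurable M" "X t \<in> borel_measurable M"
    using assms by (auto intro!: borel_measurable_Max)
  show ?thesis
    unfolding record_ind_def[abs_def] by measurable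
qed

lemma (in prob_space) expectation_record_ind:
  fixes X :: "nat \<Rightarrow> 'a \<Rightarrow> real"
  assumes meas: "\<And>t. t \<ge> 1 \<Longrightarrow> X t \<in> borel_measurable M"
    and indep: "indep_vars (\<lambda>_. borel) X {1..}"
    and ident: "\<And>t. t \<ge> 1 \<Longrightarrow> distr M borel (X t) = distr M borel (X 1)"
    and cont: "continuous_on UNIV (cdf (distr M borel (X 1)))"
    and t: "t \<ge> 1"
  shows "expectation (record_ind X t) = 1 / t"
proof (cases "t = 1")
  case True
  then have "record_ind X t = (\<lambda>_. 1)"
    by (simp add: record_ind_def fun_eq_iff)
  then show ?thesis
    using True by (simp add: prob_space)
next
  case False
  define B where "B = {x\<in>space M. Max ((\<lambda>s. X s x) ` {1..<t}) < X t x}"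
  have [measurable]: "(\<lambda>x. Max ((\<lambda>s. X s x) ` {1..<t})) \<in> borel_measurable M" "X t \<in> borel_measurable M"
    using meas t by (auto intro!: borel_measurable_Max)
  have "expectation (record_ind X t) = expectation (indicator B)"
    using False by (intro Bochner_Integration.integral_cong) (auto simp: record_ind_def B_def)
  also have "\<dots> = prob B"
    unfolding B_def by (simp add: Int_absorb2)
  also have "B = {x\<in>space M. \<forall>i\<in>{1..t} - {t}. X i x < X t x}"
  proof -
    have "{1..t} - {t} = {1..<t}" "{1..<t} \<noteq> {}"
      using t False by auto
    then show ?thesis
      by (simp add: B_def)
  qed
  also have "prob \<dots> = 1 / card {1..t}"
  proof (rule prob_strict_max_iid)
    show "finite {1..t}" "t \<in> {1..t}"
      using t by auto
    show "distr M borel (X i) = distr M borel (X 1)" if "i \<in> {1..t}" for i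
      using that by (intro ident) auto
    show "indep_vars (\<lambda>_. borel) X {1..t}"
      using indep by (rule indep_vars_subset) auto
    interpret \<mu>: real_distribution "distr M borel (X 1)"
      using meas[of 1] by simp
    show "measure (distr M borel (X 1)) {a} = 0" for a
      using cont \<mu>.isCont_cdf[of a] by (simp add: continuous_on_eq_continuous_at)
  qed
  finally show ?thesis
    by simp
qed

lemma (in prob_space) variance_record_ind:
  fixes X :: "nat \<Rightarrow> 'a \<Rightarrow> real"
  assumes meas: "\<And>t. t \<ge> 1 \<Longrightarrow> X t \<in> borel_measurable M"
    and "indep_vars (\<lambda>_. borel) X {1..}"
    and "\<And>t. t \<ge> 1 \<Longrightarrow> distr M borel (X t) = distr M borel (X 1)"
    and "continuous_on UNIV (cdf (distr M borel (X 1)))"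
    and t: "t \<ge> 1"
  shows "variance (record_ind X t) = 1 / t * (1 - 1 / t)"
proof -
  have "record_ind X t \<in> borel_measurable M"
    using meas t by (rule record_ind_measurable)
  from variance_zero_one_valued[OF this record_ind_zero_one] show ?thesis
    by (simp add: expectation_record_ind[OF assms])
qed

lemma (in prob_space) normalized_record_sum_eq:
  fixes X :: "nat \<Rightarrow> 'a \<Rightarrow> real"
  assumes "\<And>t. t \<ge> 1 \<Longrightarrow> X t \<in> borel_measurable M"
    and "indep_vars (\<lambda>_. borel) X {1..}"
    and "\<And>t. t \<ge> 1 \<Longrightarrow> distr M borel (X t) = distr M borel (X 1)"
    and "continuous_on UNIV (cdf (distr M borel (X 1)))"
  shows "(\<Sum>t=1..T. w t * (record_ind X t x - expectation (record_ind X t))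
            / sqrt (\<Sum>k=1..T. (w k)\<^sup>2 * variance (record_ind X k))) =
         (\<Sum>t=1..T. w t * (record_ind X t x - 1 / real t)
            / sqrt (\<Sum>k=1..T. (w k)\<^sup>2 * (1 / real k * (1 - 1 / real k))))"
proof -
  have "(\<Sum>k=1..T. (w k)\<^sup>2 * variance (record_ind X k)) =
      (\<Sum>k=1..T. (w k)\<^sup>2 * (1 / real k * (1 - 1 / real k)))"
    by (intro sum.cong refl) (simp add: variance_record_ind[OF assms])
  then show ?thesis
    by (intro sum.cong refl) (simp add: expectation_record_ind[OF assms])
qed

lemma sum_le_sum_add_const_if_eventually_le:
  fixes f g :: "nat \<Rightarrow> real"
  assumes "eventually (\<lambda>t. f t \<le> g t) sequentially"
  obtains C where "C \<ge> 0" "\<And>A. sum f A \<le> sum g A + C"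
proof -
  obtain N where N: "\<And>t. t \<ge> N \<Longrightarrow> f t \<le> g t"
    using assms by (auto simp: eventually_sequentially)
  define C where "C = (\<Sum>t<N. max 0 (f t - g t))"
  have "C \<ge> 0"
    unfolding C_def by (simp add: sum_nonneg)
  moreover have "sum f A \<le> sum g A + C" for A
  proof (cases "finite A")
    case True
    have "sum f A - sum g A = (\<Sum>t\<in>A. f t - g t)"
      by (simp add: sum_subtractf)
    also have "\<dots> \<le> (\<Sum>t\<in>A. if t < N then max 0 (f t - g t) else 0)"
      using N by (intro sum_mono) (auto simp: not_less)
    also have "\<dots> = (\<Sum>t\<in>A \<inter> {..<N}. max 0 (f t - g t))"
      using True by (simp add: sum.inter_restrict lessThan_def)
    also have "\<dots> \<le> C"
      unfolding C_def by (intro sum_mono2) auto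
    finally show ?thesis
      by simp
  qed (simp add: \<open>C \<ge> 0\<close>)
  ultimately show thesis
    by (rule that)
qed

lemma powr_le_two_powr_abs_mult:
  fixes x y b :: real
  assumes "0 < y" "x \<le> 2 * y" "y \<le> 2 * x"
  shows "x powr b \<le> 2 powr \<bar>b\<bar> * y powr b"
proof -
  have "(x / y) powr b \<le> 2 powr \<bar>b\<bar>"
  proof (cases "b \<ge> 0")
    case True
    then show ?thesis
      using assms by (auto intro!: powr_mono2 simp: field_simps)
  next
    case False
    have "(x / y) powr b = (y / x) powr (- b)"
      using assms by (simp add: powr_minus_divide powr_divide)
    also have "\<dots> \<le> 2 powr (- b)"
      using False assms by (auto intro!: powr_mono2 simp: field_simps)
    finally show ?thesis
      using False by simp
  qed
  then show ?thesis
    using assms by (simp add: powr_divide field_simps)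
qed

lemma powr_increment_bounds:
  fixes a x :: real
  assumes a: "a > 0" and x: "x \<ge> 2"
  shows "x powr (a - 1) \<le> 2 powr \<bar>a - 1\<bar> / a * (x powr a - (x - 1) powr a)"
    and "x powr a - (x - 1) powr a \<le> a * 2 powr \<bar>a - 1\<bar> * x powr (a - 1)"
proof -
  obtain z where z: "x - 1 < z" "z < x" and mvt: "x powr a - (x - 1) powr a = a * z powr (a - 1)"
  proof -
    have "\<exists>z. x - 1 < z \<and> z < x \<and> x powr a - (x - 1) powr a = (x - (x - 1)) * (a * z powr (a - 1))"
      by (rule MVT2) (use x in \<open>auto intro!: has_real_derivative_powr\<close>)
    then show thesis
      using that by auto
  qed
  have "x powr (a - 1) \<le> 2 powr \<bar>a - 1\<bar> * z powr (a - 1)"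
    using x z by (intro powr_le_two_powr_abs_mult) auto
  then show "x powr (a - 1) \<le> 2 powr \<bar>a - 1\<bar> / a * (x powr a - (x - 1) powr a)"
    using a by (simp add: mvt)
  have "z powr (a - 1) \<le> 2 powr \<bar>a - 1\<bar> * x powr (a - 1)"
    using x z by (intro powr_le_two_powr_abs_mult) auto
  then show "x powr a - (x - 1) powr a \<le> a * 2 powr \<bar>a - 1\<bar> * x powr (a - 1)"
    using a by (simp add: mvt)
qed

lemma sum_powr_upper_bound:
  fixes a :: real
  assumes a: "a > 0" and T: "T \<ge> 1"
  shows "(\<Sum>t=1..T. real t powr (a - 1)) \<le> (1 + 2 powr \<bar>a - 1\<bar> / a) * real T powr a"
proof -
  define K where "K = 2 powr \<bar>a - 1\<bar> / a"
  have "(\<Sum>t=1..T. real t powr (a - 1)) \<le> 1 + K * (real T powr a - 1)"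
    using T
  proof (induction T rule: dec_induct)
    case (step T)
    have "real (Suc T) powr (a - 1) \<le> K * (real (Suc T) powr a - real T powr a)"
      using powr_increment_bounds(1)[OF a, of "real (Suc T)"] step.hyps by (simp add: K_def)
    then show ?case
      using step.IH by (simp add: algebra_simps)
  qed simp
  also have "\<dots> \<le> (1 + K) * real T powr a"
  proof -
    have "K \<ge> 0" "real T powr a \<ge> 1"
      using a T by (simp_all add: K_def ge_one_powr_ge_zero)
    then show ?thesis
      by (simp add: algebra_simps)
  qed
  finally show ?thesis
    by (simp add: K_def)
qed

lemma sum_powr_lower_bound:
  fixes a :: real
  assumes a: "a > 0" and T: "T \<ge> 1"
  shows "real T powr a - 1 \<le> a * 2 powr \<bar>a - 1\<bar> * (\<Sum>t=1..T. real t powr (a - 1))"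
  using T
proof (induction T rule: dec_induct)
  case (step T)
  have "real (Suc T) powr a - real T powr a \<le> a * 2 powr \<bar>a - 1\<bar> * real (Suc T) powr (a - 1)"
    using powr_increment_bounds(2)[OF a, of "real (Suc T)"] step.hyps by simp
  then show ?case
    using step.IH by (simp add: algebra_simps)
qed (use a in simp)

lemma eventually_weight_bounds:
  fixes w :: "nat \<Rightarrow> real" and n :: real
  assumes "(\<lambda>t. w t / real t powr n) \<longlonglongrightarrow> 1"
  shows "eventually (\<lambda>t. real t powr n / 2 \<le> w t \<and> w t \<le> 2 * real t powr n) sequentially"
proof -
  have "eventually (\<lambda>t. 1/2 < w t / real t powr n) sequentially"
    by (rule order_tendstoD(1)[OF assms]) simp
  moreover have "eventually (\<lambda>t. w t / real t powr n < 2) sequentially"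
    by (rule order_tendstoD(2)[OF assms]) simp
  ultimately show ?thesis
    using eventually_ge_at_top[of 1]
  proof eventually_elim
    case (elim t)
    then have "real t powr n > 0"
      by simp
    with elim show ?case
      by (simp add: field_simps)
  qed
qed

lemma centered_term_lower_bound:
  fixes w i t :: real
  assumes "0 \<le> i" "i \<le> 1" "t > 0"
  shows "- (\<bar>w\<bar> / t + (\<bar>w\<bar> - w)) \<le> w * (i - 1 / t)"
proof (cases "w \<ge> 0")
  case True
  then show ?thesis
    using assms by (simp add: algebra_simps)
next
  case False
  have "w \<le> w * i" "w / t \<le> 0"
    using False assms by (simp_all add: mult_le_cancel_left1 divide_nonpos_pos)
  have "- (\<bar>w\<bar> / t + (\<bar>w\<bar> - w)) = w / t + 2 * w"
    using False by simp
  also have "\<dots> \<le> w * i - w / t"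
    using \<open>w \<le> w * i\<close> \<open>w / t \<le> 0\<close> False by linarith
  also have "\<dots> = w * (i - 1 / t)"
    by (simp add: right_diff_distrib)
  finally show ?thesis .
qed

lemma centered_weighted_sum_lower_bound:
  fixes w :: "nat \<Rightarrow> real" and n :: real
  assumes lim: "(\<lambda>t. w t / real t powr n) \<longlonglongrightarrow> 1" and n: "n > 0"
  obtains A where "A \<ge> 0"
    "\<And>T i. T \<ge> 1 \<Longrightarrow> (\<And>t. 0 \<le> i t \<and> i t \<le> 1) \<Longrightarrow>
       - A * real T powr n \<le> (\<Sum>t=1..T. w t * (i t - 1 / real t))"
proof -
  define f where "f t = \<bar>w t\<bar> / real t + (\<bar>w t\<bar> - w t)" for t
  have "eventually (\<lambda>t. f t \<le> 2 * real t powr (n - 1)) sequentially"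
    using eventually_weight_bounds[OF lim] eventually_ge_at_top[of 1]
  proof eventually_elim
    case (elim t)
    then have "f t = w t / real t" "w t / real t \<le> 2 * real t powr n / real t"
      by (auto simp: f_def divide_right_mono)
    then show ?case
      using elim by (simp add: powr_diff)
  qed
  then obtain C where C: "C \<ge> 0" "\<And>A. sum f A \<le> (\<Sum>t\<in>A. 2 * real t powr (n - 1)) + C"
    by (rule sum_le_sum_add_const_if_eventually_le) blast
  define K where "K = 1 + 2 powr \<bar>n - 1\<bar> / n"
  show thesis
  proof (rule that)
    show "2 * K + C \<ge> 0"
      using n C(1) by (simp add: K_def)
    fix T :: nat and i :: "nat \<Rightarrow> real" assume T: "T \<ge> 1" and i: "\<And>t. 0 \<le> i t \<and> i t \<le> 1"
    have T_pow: "real T powr n \<ge> 1"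
      using T n by (simp add: ge_one_powr_ge_zero)
    have "- (2 * K + C) * real T powr n \<le> - (2 * (K * real T powr n) + C)"
      using T_pow C(1) by (simp add: algebra_simps mult_le_cancel_left1)
    also have "\<dots> \<le> - ((\<Sum>t=1..T. 2 * real t powr (n - 1)) + C)"
      using sum_powr_upper_bound[OF n T] by (simp add: K_def sum_distrib_left[symmetric])
    also have "\<dots> \<le> (\<Sum>t=1..T. - f t)"
      using C(2)[of "{1..T}"] by (simp add: sum_negf)
    also have "\<dots> \<le> (\<Sum>t=1..T. w t * (i t - 1 / real t))"
      using i unfolding f_def by (intro sum_mono centered_term_lower_bound) auto
    finally show "- (2 * K + C) * real T powr n \<le> (\<Sum>t=1..T. w t * (i t - 1 / real t))" .
  qed
qed

lemma weighted_variance_sum_lower_bound: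
  fixes w :: "nat \<Rightarrow> real" and n :: real
  assumes lim: "(\<lambda>t. w t / real t powr n) \<longlonglongrightarrow> 1" and n: "n > 0"
  obtains b where "b > 0"
    "eventually (\<lambda>T. b * real T powr n \<le> sqrt (\<Sum>k=1..T. (w k)\<^sup>2 * (1 / real k * (1 - 1 / real k)))) sequentially"
proof -
  define v where "v k = (w k)\<^sup>2 * (1 / real k * (1 - 1 / real k))" for k
  have "eventually (\<lambda>k. real k powr (2 * n - 1) / 8 \<le> v k) sequentially"
    using eventually_weight_bounds[OF lim] eventually_ge_at_top[of 2]
  proof eventually_elim
    case (elim k)
    have "(real k powr n / 2)\<^sup>2 \<le> (w k)\<^sup>2"
      using elim by (intro power_mono) auto
    moreover have "1 / (2 * real k) \<le> 1 / real k * (1 - 1 / real k)"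
      using elim by (simp add: field_simps)
    ultimately have "(real k powr n / 2)\<^sup>2 * (1 / (2 * real k)) \<le> v k"
      unfolding v_def by (intro mult_mono) auto
    moreover have "(real k powr n / 2)\<^sup>2 * (1 / (2 * real k)) = real k powr (2 * n - 1) / 8"
      using elim by (simp add: power2_eq_square powr_diff powr_add[symmetric])
    ultimately show ?case
      by simp
  qed
  then obtain C where C: "C \<ge> 0" "\<And>A. (\<Sum>k\<in>A. real k powr (2 * n - 1) / 8) \<le> sum v A + C"
    by (rule sum_le_sum_add_const_if_eventually_le) blast
  define L where "L = 1 / (16 * n * 2 powr \<bar>2 * n - 1\<bar>)"
  have L: "L > 0"
    using n by (simp add: L_def)
  have "filterlim (\<lambda>T::nat. real T powr (2 * n)) at_top sequentially"
    using n by real_asymp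
  then have "eventually (\<lambda>T. 2 * (L + C) / L \<le> real T powr (2 * n)) sequentially"
    by (simp add: filterlim_at_top)
  then have "eventually (\<lambda>T. sqrt (L / 2) * real T powr n \<le> sqrt (sum v {1..T})) sequentially"
    using eventually_ge_at_top[of 1]
  proof eventually_elim
    case (elim T)
    have "L * (real T powr (2 * n) - 1) \<le> (\<Sum>k=1..T. real k powr (2 * n - 1) / 8)"
      using sum_powr_lower_bound[of "2 * n" T] n elim
      by (simp add: L_def sum_divide_distrib[symmetric] field_simps)
    also have "\<dots> \<le> sum v {1..T} + C"
      by (rule C(2))
    finally have "L / 2 * real T powr (2 * n) \<le> sum v {1..T}"
      using elim L by (simp add: field_simps)
    moreover have "real T powr (2 * n) = (real T powr n)\<^sup>2"
      by (simp add: power2_eq_square powr_add[symmetric])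
    ultimately have "(sqrt (L / 2) * real T powr n)\<^sup>2 \<le> sum v {1..T}"
      using L by (simp add: power_mult_distrib)
    then show ?case
      by (simp add: real_le_rsqrt)
  qed
  then show thesis
    using L by (intro that[of "sqrt (L / 2)"]) (simp_all add: v_def)
qed

lemma normalized_centered_sum_bounded_below:
  fixes w :: "nat \<Rightarrow> real" and n :: real
  assumes lim: "(\<lambda>t. w t / real t powr n) \<longlonglongrightarrow> 1" and n: "n > 0"
  obtains C where "eventually (\<lambda>T. \<forall>i. (\<forall>t. 0 \<le> i t \<and> i t \<le> 1) \<longrightarrow>
      - C \<le> (\<Sum>t=1..T. w t * (i t - 1 / real t) /
                 sqrt (\<Sum>k=1..T. (w k)\<^sup>2 * (1 / real k * (1 - 1 / real k))))) sequentially"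
proof -
  obtain A where A: "A \<ge> 0"
    "\<And>T i. T \<ge> 1 \<Longrightarrow> (\<And>t. 0 \<le> i t \<and> i t \<le> 1) \<Longrightarrow>
       - A * real T powr n \<le> (\<Sum>t=1..T. w t * (i t - 1 / real t))"
    using centered_weighted_sum_lower_bound[OF lim n] by blast
  obtain b where b: "b > 0"
    "eventually (\<lambda>T. b * real T powr n \<le> sqrt (\<Sum>k=1..T. (w k)\<^sup>2 * (1 / real k * (1 - 1 / real k)))) sequentially"
    using weighted_variance_sum_lower_bound[OF lim n] by blast
  from b(2) eventually_ge_at_top[of 1]
  have "eventually (\<lambda>T. \<forall>i. (\<forall>t. 0 \<le> i t \<and> i t \<le> 1) \<longrightarrow>
      - (A / b) \<le> (\<Sum>t=1..T. w t * (i t - 1 / real t) /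
                 sqrt (\<Sum>k=1..T. (w k)\<^sup>2 * (1 / real k * (1 - 1 / real k))))) sequentially"
  proof eventually_elim
    case (elim T)
    define D where "D = sqrt (\<Sum>k=1..T. (w k)\<^sup>2 * (1 / real k * (1 - 1 / real k)))"
    have bT: "b * real T powr n > 0"
      using b(1) elim by simp
    have D: "b * real T powr n \<le> D"
      using elim by (simp add: D_def)
    then have "D > 0"
      using bT by linarith
    show ?case
    proof (intro allI impI)
      fix i :: "nat \<Rightarrow> real" assume i: "\<forall>t. 0 \<le> i t \<and> i t \<le> 1"
      have "- (A / b) = - A * real T powr n / (b * real T powr n)"
        using bT elim by simp
      also have "\<dots> \<le> - A * real T powr n / D"
        using A(1) bT D \<open>D > 0\<close> by (intro divide_left_mono_neg) auto
      also have "\<dots> \<le> (\<Sum>t=1..T. w t * (i t - 1 / real t)) / D"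
        using A(2)[of T i] i elim \<open>D > 0\<close> by (intro divide_right_mono) auto
      finally show "- (A / b) \<le> (\<Sum>t=1..T. w t * (i t - 1 / real t) /
          sqrt (\<Sum>k=1..T. (w k)\<^sup>2 * (1 / real k * (1 - 1 / real k))))"
        by (simp add: D_def sum_divide_distrib)
    qed
  qed
  then show thesis
    by (rule that)
qed

lemma cdf_std_normal_pos: "cdf std_normal_distribution c > 0"
proof -
  interpret real_distribution std_normal_distribution
    by (rule real_dist_normal_dist)
  have density_measurable: "(\<lambda>x. ennreal (std_normal_density x)) \<in> borel_measurable lborel"
    by measurable
  have "{..c} \<notin> null_sets std_normal_distribution"
  proof
    assume "{..c} \<in> null_sets std_normal_distribution"
    then have "AE x in lborel. x \<in> {..c} \<longrightarrow> ennreal (std_normal_density x) = 0"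
      using null_sets_density_iff[OF density_measurable] by blast
    then have "AE x in lborel. x \<notin> {c - 1..c}"
    proof eventually_elim
      case (elim x)
      then show ?case
        using normal_density_pos[of 1 0 x] by auto
    qed
    then have "{c - 1..c} \<in> null_sets lborel"
      by (subst AE_iff_null_sets) auto
    then show False
      by (simp add: null_sets_def)
  qed
  then have "measure std_normal_distribution {..c} \<noteq> 0"
    by (simp add: emeasure_eq_measure null_sets_def)
  then show ?thesis
    using measure_nonneg[of std_normal_distribution "{..c}"] unfolding cdf_def by linarith
qed

lemma isCont_cdf_std_normal: "isCont (cdf std_normal_distribution) c"
proof -
  interpret real_distribution std_normal_distribution
    by (rule real_dist_normal_dist)
  have "AE x in lborel. x \<in> {c} \<longrightarrow> ennreal (std_normal_density x) = 0"
    using AE_lborel_singleton[of c] by eventually_elim simp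
  then have "{c} \<in> null_sets std_normal_distribution"
    by (subst null_sets_density_iff) auto
  then show ?thesis
    by (simp add: isCont_cdf measure_def null_sets_def)
qed

lemma (in prob_space) not_weak_conv_std_normal_if_bounded_below:
  fixes f :: "nat \<Rightarrow> 'a \<Rightarrow> real"
  assumes meas: "\<And>T. f T \<in> borel_measurable M"
    and bounded: "eventually (\<lambda>T. \<forall>x\<in>space M. c \<le> f T x) sequentially"
  shows "\<not> weak_conv_m (\<lambda>T. distr M borel (f T)) std_normal_distribution"
proof
  assume "weak_conv_m (\<lambda>T. distr M borel (f T)) std_normal_distribution"
  then have "(\<lambda>T. cdf (distr M borel (f T)) (c - 1)) \<longlonglongrightarrow> cdf std_normal_distribution (c - 1)"
    using isCont_cdf_std_normal unfolding weak_conv_m_def weak_conv_def by blast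
  moreover have "(\<lambda>T. cdf (distr M borel (f T)) (c - 1)) \<longlonglongrightarrow> 0"
    using bounded
  proof (rule tendsto_eventually[OF eventually_mono])
    fix T assume "\<forall>x\<in>space M. c \<le> f T x"
    then have "f T -` {..c - 1} \<inter> space M = {}"
      by force
    then show "cdf (distr M borel (f T)) (c - 1) = 0"
      using meas by (simp add: cdf_def measure_distr)
  qed
  ultimately have "cdf std_normal_distribution (c - 1) = 0"
    by (rule LIMSEQ_unique)
  with cdf_std_normal_pos show False
    by (metis less_irrefl)
qed

theorem proposition2p1:
  fixes M :: "'a measure" and X :: "nat \<Rightarrow> 'a \<Rightarrow> real"
    and w :: "nat \<Rightarrow> real" and n :: real
  assumes "prob_space M"
    and "\<And>t. t \<ge> 1 \<Longrightarrow> X t \<in> borel_measurable M"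
    and "prob_space.indep_vars M (\<lambda>_. borel) X {1..}"
    and "\<And>t. t \<ge> 1 \<Longrightarrow> distr M borel (X t) = distr M borel (X 1)"
    and "continuous_on UNIV (cdf (distr M borel (X 1)))"
    and "(\<lambda>t. w t / real t powr n) \<longlonglongrightarrow> 1"
    and "n > 0"
  shows "\<not> weak_conv_m
           (\<lambda>T. distr M borel (\<lambda>x. \<Sum>t=1..T.
               w t * (record_ind X t x - prob_space.expectation M (record_ind X t))
               / sqrt (\<Sum>k=1..T. (w k)\<^sup>2 * prob_space.variance M (record_ind X k))))
           std_normal_distribution"
proof -
  interpret prob_space M by fact
  define S where "S T x = (\<Sum>t=1..T. w t * (record_ind X t x - expectation (record_ind X t))
               / sqrt (\<Sum>k=1..T. (w k)\<^sup>2 * variance (record_ind X k)))" for T x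
  obtain C where "eventually (\<lambda>T. \<forall>i. (\<forall>t. 0 \<le> i t \<and> i t \<le> 1) \<longrightarrow>
      - C \<le> (\<Sum>t=1..T. w t * (i t - 1 / real t) /
                 sqrt (\<Sum>k=1..T. (w k)\<^sup>2 * (1 / real k * (1 - 1 / real k))))) sequentially"
    using normalized_centered_sum_bounded_below[OF assms(6,7)] by blast
  then have "eventually (\<lambda>T. \<forall>x\<in>space M. - C \<le> S T x) sequentially"
  proof eventually_elim
    case (elim T)
    have "S T x = (\<Sum>t=1..T. w t * (record_ind X t x - 1 / real t)
        / sqrt (\<Sum>k=1..T. (w k)\<^sup>2 * (1 / real k * (1 - 1 / real k))))" for x
      unfolding S_def by (rule normalized_record_sum_eq[OF assms(2-5)])
    then have "- C \<le> S T x" for x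
      using elim[rule_format, of "\<lambda>t. record_ind X t x"] by (simp add: record_ind_bounds)
    then show ?case
      by blast
  qed
  moreover have "S T \<in> borel_measurable M" for T
    using record_ind_measurable[OF assms(2)] unfolding S_def by (auto intro!: borel_measurable_sum)
  ultimately have "\<not> weak_conv_m (\<lambda>T. distr M borel (S T)) std_normal_distribution"
    by (intro not_weak_conv_std_normal_if_bounded_below)
  then show ?thesis
    unfolding S_def[abs_def] .
qed

end
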